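(* Consider the system $\mathbf{x}_{k+1}=f_k(\mathbf{x}_k,\mathbf{w}_k)$, $\mathbf{y}_k=g_k(\mathbf{x}_k,\mathbf{v}_k)$, $k\in\mathbb{N}_0$, and assume that for every $k\in\mathbb{N}_0$ the uncertain variables $\mathbf{w}_0,\dots,\mathbf{w}_k,\mathbf{v}_0,\dots,\mathbf{v}_k,\mathbf{x}_0$ are unrelated. Then for every $k\in\mathbb{Z}_+$ and every $(x_{0:k-1},y_{0:k-1})\in\llbracket\mathbf{x}_{0:k-1},\mathbf{y}_{0:k-1}\rrbracket$, \[ \llbracket\mathbf{x}_k\,|\,x_{0:k-1},y_{0:k-1}\rrbracket=\llbracket\mathbf{x}_k\,|\,x_{k-1}\rrbracket, \] and for every $k\in\mathbb{N}_0$ and every $(x_{0:k},y_{0:k-1})\in\llbracket\mathbf{x}_{0:k},\mathbf{y}_{0:k-1}\rrbracket$, \[ \llbracket\mathbf{y}_k\,|\,x_{0:k},y_{0:k-1}\rrbracket=\llbracket\mathbf{y}_k\,|\,x_k\rrbracket . \]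
   Context: Uncertain variables: fix a nonempty set $\Omega$. An uncertain variable is a (measurable) function $\mathbf{x}\colon\Omega\to\mathcal{X}$; a realization is $x=\mathbf{x}(\omega)$. Tuples such as $\mathbf{x}_{0:k}:=(\mathbf{x}_0,\dots,\mathbf{x}_k)$ are regarded as uncertain variables $\omega\mapsto(\mathbf{x}_0(\omega),\dots,\mathbf{x}_k(\omega))$. Range: $\llbracket\mathbf{x}\rrbracket:=\{\mathbf{x}(\omega):\omega\in\Omega\}$; joint range $\llbracket\mathbf{u}_1,\dots,\mathbf{u}_r\rrbracket:=\{(\mathbf{u}_1(\omega),\dots,\mathbf{u}_r(\omega)):\omega\in\Omega\}$. Conditional range: $\llbracket\mathbf{x}\,|\,y\rrbracket:=\{\mathbf{x}(\omega):\omega\in\Omega,\ \mathbf{y}(\omega)=y\}$ (conditioning on several values means conditioning on the tuple); for $k=0$ the conditioning on $y_{0:-1}$ is empty. Unrelatedness: $\mathbf{u}_1,\dots,\mathbf{u}_r$ are unrelated if $\llbracket\mathbf{u}_1,\dots,\mathbf{u}_r\rrbracket=\llbracket\mathbf{u}_1\rrbracket\times\cdots\times\llbracket\mathbf{u}_r\rrbracket$. System: $f_k\colon\llbracket\mathbf{x}_k\rrbracket\times\llbracket\mathbf{w}_k\rrbracket\to\llbracket\mathbf{x}_{k+1}\rrbracket$, $g_k\colon\llbracket\mathbf{x}_k\rrbracket\times\llbracket\mathbf{v}_k\rrbracket\to\llbracket\mathbf{y}_k\rrbracket$ are maps, with state, process noise, measurement and measurement noise valued in Euclidean spaces, and $\mathbf{x}_{k+1}(\omega)=f_k(\mathbf{x}_k(\omega),\mathbf{w}_k(\omega))$,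 $\mathbf{y}_k(\omega)=g_k(\mathbf{x}_k(\omega),\mathbf{v}_k(\omega))$ for all $\omega\in\Omega$. *)

theory Defs
  imports "HOL-Analysis.Analysis"
begin

text \<open>Uncertain variables are functions from the sample type 'o (Omega) to a value type.\<close>

definition urange :: "('o \<Rightarrow> 'a) \<Rightarrow> 'a set" where
  "urange X = {X \<omega> | \<omega>. True}"

definition crange :: "('o \<Rightarrow> 'a) \<Rightarrow> ('o \<Rightarrow> 'b) \<Rightarrow> 'b \<Rightarrow> 'a set" where
  "crange X Y y = {X \<omega> | \<omega>. Y \<omega> = y}"

text \<open>Tuple u_{0:k-1} as a list of length k.\<close>
definition utup :: "(nat \<Rightarrow> 'o \<Rightarrow> 'a) \<Rightarrow> nat \<Rightarrow> 'o \<Rightarrow> 'a list" where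
  "utup u k \<omega> = map (\<lambda>i. u i \<omega>) [0..<k]"

definition unrelated_wvx ::
  "nat \<Rightarrow> (nat \<Rightarrow> 'o \<Rightarrow> 'w) \<Rightarrow> (nat \<Rightarrow> 'o \<Rightarrow> 'v) \<Rightarrow> ('o \<Rightarrow> 'x) \<Rightarrow> bool" where
  "unrelated_wvx k w v x0 \<longleftrightarrow>
     urange (\<lambda>\<omega>. (\<lambda>i\<in>{..k}. w i \<omega>, \<lambda>i\<in>{..k}. v i \<omega>, x0 \<omega>)) =
     (PiE {..k} (\<lambda>i. urange (w i))) \<times> (PiE {..k} (\<lambda>i. urange (v i))) \<times> urange x0"

end

theory Submission
  imports Defs
begin

text \<open>Unrelatedness lets us splice outcomes: for any \<open>\<omega>\<^sub>0\<close> there is an outcome that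
  agrees with \<open>\<omega>\<^sub>0\<close> on \<open>x\<^sub>0\<close> and on the noises before time \<open>n\<close>, while its current
  noises \<open>w\<^sub>n, v\<^sub>n\<close> are taken from arbitrary other outcomes. Since \<open>x\<^sub>0, \<dots>, x\<^sub>n\<close> and
  \<open>y\<^sub>0, \<dots>, y\<^sub>n\<^sub>-\<^sub>1\<close> are functions of those earlier inputs only, the spliced outcome
  has the past of \<open>\<omega>\<^sub>0\<close>, whereas \<open>x\<^sub>n\<^sub>+\<^sub>1 = f\<^sub>n(x\<^sub>n, w\<^sub>n)\<close> and \<open>y\<^sub>n = g\<^sub>n(x\<^sub>n, v\<^sub>n)\<close> still
  reach every value compatible with \<open>x\<^sub>n\<close>. So conditioning on the whole past gives
  the same range as conditioning on \<open>x\<^sub>n\<close>.\<close>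

lemma unrelated_wvx_realize:
  assumes "unrelated_wvx k w v x0"
  obtains \<omega> where "\<And>i. i \<le> k \<Longrightarrow> w i \<omega> = w i (a i)"
    and "\<And>i. i \<le> k \<Longrightarrow> v i \<omega> = v i (b i)" and "x0 \<omega> = x0 c"
proof -
  have "(\<lambda>i\<in>{..k}. w i (a i), \<lambda>i\<in>{..k}. v i (b i), x0 c) \<in>
      PiE {..k} (\<lambda>i. urange (w i)) \<times> PiE {..k} (\<lambda>i. urange (v i)) \<times> urange x0"
    by (auto simp: urange_def)
  then have "(\<lambda>i\<in>{..k}. w i (a i), \<lambda>i\<in>{..k}. v i (b i), x0 c) \<in>
      urange (\<lambda>\<omega>. (\<lambda>i\<in>{..k}. w i \<omega>, \<lambda>i\<in>{..k}. v i \<omega>, x0 \<omega>))"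
    using assms unfolding unrelated_wvx_def by simp
  then obtain \<omega> where eq: "(\<lambda>i\<in>{..k}. w i (a i)) = (\<lambda>i\<in>{..k}. w i \<omega>)"
      "(\<lambda>i\<in>{..k}. v i (b i)) = (\<lambda>i\<in>{..k}. v i \<omega>)" "x0 c = x0 \<omega>"
    unfolding urange_def by auto
  show thesis
  proof
    show "w i \<omega> = w i (a i)" if "i \<le> k" for i
      using fun_cong[OF eq(1), of i] that by simp
    show "v i \<omega> = v i (b i)" if "i \<le> k" for i
      using fun_cong[OF eq(2), of i] that by simp
  qed (use eq(3) in simp)
qed

lemma state_eq_if_inputs_eq:
  assumes dyn: "\<And>k \<omega>. x (Suc k) \<omega> = f k (x k \<omega>) (w k \<omega>)"
    and "x 0 \<omega> = x 0 \<omega>'" and "\<And>i. i < n \<Longrightarrow> w i \<omega> = w i \<omega>'"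
  shows "x n \<omega> = x n \<omega>'"
  using assms(3) by (induction n) (simp_all add: assms(2) dyn)

lemma utup_cong: "(\<And>i. i < k \<Longrightarrow> u i \<omega> = u i \<omega>') \<Longrightarrow> utup u k \<omega> = utup u k \<omega>'"
  unfolding utup_def by simp

lemma utup_nth: "i < k \<Longrightarrow> utup u k \<omega> ! i = u i \<omega>"
  unfolding utup_def by simp

lemma crange_eqI:
  assumes "\<And>\<omega>. Z \<omega> = z \<Longrightarrow> Y \<omega> = y"
    and "\<And>\<omega>'. Y \<omega>' = y \<Longrightarrow> \<exists>\<omega>. Z \<omega> = z \<and> X \<omega> = X \<omega>'"
  shows "crange X Z z = crange X Y y"
proof
  show "crange X Z z \<subseteq> crange X Y y"
    unfolding crange_def using assms(1) by blast
  show "crange X Y y \<subseteq> crange X Z z"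
  proof
    fix a assume "a \<in> crange X Y y"
    then obtain \<omega>' where "Y \<omega>' = y" "a = X \<omega>'" unfolding crange_def by blast
    moreover obtain \<omega> where "Z \<omega> = z" "X \<omega> = X \<omega>'"
      using assms(2) \<open>Y \<omega>' = y\<close> by blast
    ultimately have "a = X \<omega> \<and> Z \<omega> = z" by simp
    then show "a \<in> crange X Z z" unfolding crange_def by blast
  qed
qed

lemma history_splice:
  assumes dyn: "\<And>k \<omega>. x (Suc k) \<omega> = f k (x k \<omega>) (w k \<omega>)"
    and obs: "\<And>k \<omega>. y k \<omega> = g k (x k \<omega>) (v k \<omega>)"
    and unrel: "unrelated_wvx n w v (x 0)"
  obtains \<omega> where "\<And>i. i \<le> n \<Longrightarrow> x i \<omega> = x i \<omega>\<^sub>0" and "\<And>i. i < n \<Longrightarrow> y i \<omega> = y i \<omega>\<^sub>0"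
    and "w n \<omega> = w n \<omega>\<^sub>1" and "v n \<omega> = v n \<omega>\<^sub>2"
proof -
  obtain \<omega> where w: "\<And>i. i \<le> n \<Longrightarrow> w i \<omega> = w i (if i < n then \<omega>\<^sub>0 else \<omega>\<^sub>1)"
    and v: "\<And>i. i \<le> n \<Longrightarrow> v i \<omega> = v i (if i < n then \<omega>\<^sub>0 else \<omega>\<^sub>2)"
    and x0: "x 0 \<omega> = x 0 \<omega>\<^sub>0"
    using unrelated_wvx_realize[OF unrel, of "\<lambda>i. if i < n then \<omega>\<^sub>0 else \<omega>\<^sub>1"
        "\<lambda>i. if i < n then \<omega>\<^sub>0 else \<omega>\<^sub>2" "\<omega>\<^sub>0"] by blast
  have x: "x i \<omega> = x i \<omega>\<^sub>0" if "i \<le> n" for i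
    using state_eq_if_inputs_eq[of x f w, OF dyn x0] w that by simp
  show thesis
  proof
    show "y i \<omega> = y i \<omega>\<^sub>0" if "i < n" for i
      using x[of i] v[of i] that by (simp add: obs)
  qed (use x w[of n] v[of n] in simp_all)
qed

lemma crange_state_given_past:
  assumes dyn: "\<And>k \<omega>. x (Suc k) \<omega> = f k (x k \<omega>) (w k \<omega>)"
    and obs: "\<And>k \<omega>. y k \<omega> = g k (x k \<omega>) (v k \<omega>)"
    and unrel: "unrelated_wvx n w v (x 0)"
    and past: "(xs, ys) \<in> urange (\<lambda>\<omega>. (utup x (Suc n) \<omega>, utup y (Suc n) \<omega>))"
  shows "crange (x (Suc n)) (\<lambda>\<omega>. (utup x (Suc n) \<omega>, utup y (Suc n) \<omega>)) (xs, ys)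
           = crange (x (Suc n)) (x n) (xs ! n)"
proof (rule crange_eqI)
  obtain \<omega>\<^sub>0 where xs: "xs = utup x (Suc n) \<omega>\<^sub>0" and ys: "ys = utup y (Suc n) \<omega>\<^sub>0"
    using past unfolding urange_def by auto
  show "x n \<omega> = xs ! n" if "(utup x (Suc n) \<omega>, utup y (Suc n) \<omega>) = (xs, ys)" for \<omega>
    using that by (auto simp: utup_nth)
  fix \<omega>\<^sub>1 assume "x n \<omega>\<^sub>1 = xs ! n"
  then have x1: "x n \<omega>\<^sub>1 = x n \<omega>\<^sub>0" by (simp add: xs utup_nth)
  obtain \<omega> where x: "\<And>i. i \<le> n \<Longrightarrow> x i \<omega> = x i \<omega>\<^sub>0" and y: "\<And>i. i < n \<Longrightarrow> y i \<omega> = y i \<omega>\<^sub>0"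
    and w: "w n \<omega> = w n \<omega>\<^sub>1" and v: "v n \<omega> = v n \<omega>\<^sub>0"
    by (rule history_splice[of x f w y g v n \<omega>\<^sub>0 \<omega>\<^sub>1 \<omega>\<^sub>0, OF dyn obs unrel]) (rule that)
  have "y n \<omega> = y n \<omega>\<^sub>0"
    unfolding obs[of n] using x[of n] v by simp
  with y have "y i \<omega> = y i \<omega>\<^sub>0" if "i < Suc n" for i
    using that by (cases "i = n") auto
  with x have "utup x (Suc n) \<omega> = xs" "utup y (Suc n) \<omega> = ys"
    unfolding xs ys by (auto intro!: utup_cong)
  moreover have "x (Suc n) \<omega> = x (Suc n) \<omega>\<^sub>1"
    unfolding dyn[of n] using x[of n] x1 w by simp
  ultimately show "\<exists>\<omega>. (utup x (Suc n) \<omega>, utup y (Suc n) \<omega>) = (xs, ys)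
                    \<and> x (Suc n) \<omega> = x (Suc n) \<omega>\<^sub>1"
    by auto
qed

lemma crange_output_given_past:
  assumes dyn: "\<And>k \<omega>. x (Suc k) \<omega> = f k (x k \<omega>) (w k \<omega>)"
    and obs: "\<And>k \<omega>. y k \<omega> = g k (x k \<omega>) (v k \<omega>)"
    and unrel: "unrelated_wvx n w v (x 0)"
    and past: "(xs, ys) \<in> urange (\<lambda>\<omega>. (utup x (Suc n) \<omega>, utup y n \<omega>))"
  shows "crange (y n) (\<lambda>\<omega>. (utup x (Suc n) \<omega>, utup y n \<omega>)) (xs, ys)
           = crange (y n) (x n) (xs ! n)"
proof (rule crange_eqI)
  obtain \<omega>\<^sub>0 where xs: "xs = utup x (Suc n) \<omega>\<^sub>0" and ys: "ys = utup y n \<omega>\<^sub>0"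
    using past unfolding urange_def by auto
  show "x n \<omega> = xs ! n" if "(utup x (Suc n) \<omega>, utup y n \<omega>) = (xs, ys)" for \<omega>
    using that by (auto simp: utup_nth)
  fix \<omega>\<^sub>1 assume "x n \<omega>\<^sub>1 = xs ! n"
  then have x1: "x n \<omega>\<^sub>1 = x n \<omega>\<^sub>0" by (simp add: xs utup_nth)
  obtain \<omega> where x: "\<And>i. i \<le> n \<Longrightarrow> x i \<omega> = x i \<omega>\<^sub>0" and y: "\<And>i. i < n \<Longrightarrow> y i \<omega> = y i \<omega>\<^sub>0"
    and v: "v n \<omega> = v n \<omega>\<^sub>1"
    by (rule history_splice[of x f w y g v n \<omega>\<^sub>0 \<omega>\<^sub>0 \<omega>\<^sub>1, OF dyn obs unrel]) (rule that)
  from x y have "utup x (Suc n) \<omega> = xs" "utup y n \<omega> = ys"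
    unfolding xs ys by (auto intro!: utup_cong)
  moreover have "y n \<omega> = y n \<omega>\<^sub>1"
    unfolding obs[of n] using x[of n] x1 v by simp
  ultimately show "\<exists>\<omega>. (utup x (Suc n) \<omega>, utup y n \<omega>) = (xs, ys) \<and> y n \<omega> = y n \<omega>\<^sub>1"
    by auto
qed

theorem mainTheorem8:
  fixes x :: "nat \<Rightarrow> 'o \<Rightarrow> 'x::euclidean_space"
    and w :: "nat \<Rightarrow> 'o \<Rightarrow> 'w::euclidean_space"
    and y :: "nat \<Rightarrow> 'o \<Rightarrow> 'y::euclidean_space"
    and v :: "nat \<Rightarrow> 'o \<Rightarrow> 'v::euclidean_space"
    and f :: "nat \<Rightarrow> 'x \<Rightarrow> 'w \<Rightarrow> 'x"
    and g :: "nat \<Rightarrow> 'x \<Rightarrow> 'v \<Rightarrow> 'y"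
  assumes dyn: "\<And>k \<omega>. x (Suc k) \<omega> = f k (x k \<omega>) (w k \<omega>)"
    and obs: "\<And>k \<omega>. y k \<omega> = g k (x k \<omega>) (v k \<omega>)"
    and unrel: "\<And>k. unrelated_wvx k w v (x 0)"
  shows "(\<forall>k\<ge>1. \<forall>xs ys. (xs, ys) \<in> urange (\<lambda>\<omega>. (utup x k \<omega>, utup y k \<omega>)) \<longrightarrow>
            crange (x k) (\<lambda>\<omega>. (utup x k \<omega>, utup y k \<omega>)) (xs, ys)
              = crange (x k) (x (k - 1)) (xs ! (k - 1)))
       \<and> (\<forall>k. \<forall>xs ys. (xs, ys) \<in> urange (\<lambda>\<omega>. (utup x (Suc k) \<omega>, utup y k \<omega>)) \<longrightarrow>
            crange (y k) (\<lambda>\<omega>. (utup x (Suc k) \<omega>, utup y k \<omega>)) (xs, ys)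
              = crange (y k) (x k) (xs ! k))"
proof (intro conjI allI impI)
  fix k :: nat and xs ys
  assume "k \<ge> 1" and "(xs, ys) \<in> urange (\<lambda>\<omega>. (utup x k \<omega>, utup y k \<omega>))"
  moreover obtain n where "k = Suc n" using \<open>k \<ge> 1\<close> by (cases k) auto
  ultimately show "crange (x k) (\<lambda>\<omega>. (utup x k \<omega>, utup y k \<omega>)) (xs, ys)
                     = crange (x k) (x (k - 1)) (xs ! (k - 1))"
    using crange_state_given_past[of x f w y g v, OF dyn obs unrel] by simp
next
  fix k :: nat and xs ys
  assume "(xs, ys) \<in> urange (\<lambda>\<omega>. (utup x (Suc k) \<omega>, utup y k \<omega>))"
  then show "crange (y k) (\<lambda>\<omega>. (utup x (Suc k) \<omega>, utup y k \<omega>)) (xs, ys)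
               = crange (y k) (x k) (xs ! k)"
    by (rule crange_output_given_past[of x f w y g v, OF dyn obs unrel])
qed

end
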